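(* Let $\rho$ be a density operator on $\mathbb{C}^3$. If the KD distribution $K_\rho(x,y)$ of $(J^{(1)}_1,J^{(1)}_2)$ is real-valued (all coefficients of the delta functions are real), then $\langle J^{(1)}_3\rangle_\rho:=\mathrm{Tr}[J^{(1)}_3\rho]=0$.
   Context: Spin-1 matrices: $J^{(1)}_1=\frac{1}{\sqrt2}\begin{pmatrix}0&1&0\\1&0&1\\0&1&0\end{pmatrix}$, $J^{(1)}_2=\frac{1}{\sqrt2}\begin{pmatrix}0&-i&0\\i&0&-i\\0&i&0\end{pmatrix}$, $J^{(1)}_3=\begin{pmatrix}1&0&0\\0&0&0\\0&0&-1\end{pmatrix}$. A density operator is a positive semidefinite trace-one operator. Kirkwood–Dirac (KD) distribution: for Hermitian operators $A_1,\dots,A_n$ on $\mathbb{C}^N$ and a density operator $\rho$, define $\#^{K}_{A_1,\dots,A_n}(x)=(2\pi)^{-n}\int_{\mathbb{R}^n} e^{-is_1A_1}\cdots e^{-is_nA_n}\,e^{i s\cdot x}\,d^ns$ (inverse Fourier transform in the distributional sense), and $K^{A_1,\dots,A_n}_\rho(x)=\mathrm{Tr}[\#^{K}_{A_1,\dots,A_n}(x)\,\rho]$; for this pair it is a finite linear combination of $\delta(x-\alpha)\delta(y-\beta)$. *)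

theory Defs
  imports "Jordan_Normal_Form.Schur_Decomposition"
begin

definition J1 :: "complex mat" where
  "J1 = (1 / complex_of_real (sqrt 2)) \<cdot>\<^sub>m
     mat 3 3 (\<lambda>(i,j). if (i = 0 \<and> j = 1) \<or> (i = 1 \<and> j = 0) \<or> (i = 1 \<and> j = 2) \<or> (i = 2 \<and> j = 1)
                      then 1 else 0)"

definition J2 :: "complex mat" where
  "J2 = (1 / complex_of_real (sqrt 2)) \<cdot>\<^sub>m
     mat 3 3 (\<lambda>(i,j). if (i = 0 \<and> j = 1) \<or> (i = 1 \<and> j = 2) then - \<i>
                      else if (i = 1 \<and> j = 0) \<or> (i = 2 \<and> j = 1) then \<i> else 0)"

definition J3 :: "complex mat" where
  "J3 = mat 3 3 (\<lambda>(i,j). if i = 0 \<and> j = 0 then 1 else if i = 2 \<and> j = 2 then -1 else 0)"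

definition mtrace :: "complex mat \<Rightarrow> complex" where
  "mtrace A = (\<Sum>i<dim_row A. A $$ (i, i))"

definition density_operator :: "nat \<Rightarrow> complex mat \<Rightarrow> bool" where
  "density_operator n \<rho> \<longleftrightarrow> \<rho> \<in> carrier_mat n n \<and> mat_adjoint \<rho> = \<rho> \<and>
     (\<forall>v \<in> carrier_vec n. Im (v \<bullet>c (\<rho> *\<^sub>v v)) = 0 \<and> Re (v \<bullet>c (\<rho> *\<^sub>v v)) \<ge> 0) \<and>
     mtrace \<rho> = 1"

text \<open>Spectral projection of a Hermitian n x n matrix A for the value a: the orthogonal
  projection onto the eigenspace ker (A - a I) (the zero matrix if a is not an eigenvalue).\<close>
definition eig_proj :: "nat \<Rightarrow> complex mat \<Rightarrow> complex \<Rightarrow> complex mat" where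
  "eig_proj n A a = (THE P. P \<in> carrier_mat n n \<and> mat_adjoint P = P \<and> P * P = P \<and>
     (\<forall>v \<in> carrier_vec n. (\<exists>w \<in> carrier_vec n. v = P *\<^sub>v w) \<longleftrightarrow> A *\<^sub>v v = a \<cdot>\<^sub>v v))"

text \<open>Since exp(-i s1 A1) exp(-i s2 A2) = sum over (alpha,beta) of exp(-i(s1 alpha + s2 beta)) P_alpha Q_beta,
  the KD quasi-distribution is K(x,y) = sum over (alpha,beta) of Tr[P_alpha Q_beta rho] delta(x-alpha) delta(y-beta).
  kd_coeff gives the coefficient of delta(x-alpha) delta(y-beta) (zero off the joint spectrum).\<close>
definition kd_coeff :: "nat \<Rightarrow> complex mat \<Rightarrow> complex mat \<Rightarrow> complex mat \<Rightarrow> real \<Rightarrow> real \<Rightarrow> complex" where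
  "kd_coeff n A B \<rho> \<alpha> \<beta> = mtrace (eig_proj n A (of_real \<alpha>) * eig_proj n B (of_real \<beta>) * \<rho>)"

end

theory Submission
  imports Defs
begin

text \<open>For Hermitian \<open>P\<close>, \<open>Q\<close>, \<open>\<rho>\<close> one has \<open>Tr(QP\<rho>) = conj Tr(PQ\<rho>)\<close>, so
  \<open>Tr([P,Q]\<rho>) = 2i Im Tr(PQ\<rho>)\<close>. Since \<open>J\<^sub>1\<close> and \<open>J\<^sub>2\<close> have spectrum \<open>{-1,0,1}\<close>,
  they are differences \<open>P\<^sub>+ - P\<^sub>-\<close> and \<open>Q\<^sub>+ - Q\<^sub>-\<close> of their spectral projections, so
  \<open>Tr(J\<^sub>1J\<^sub>2\<rho>)\<close> is a signed sum of the four KD coefficients at \<open>(\<plusminus>1,\<plusminus>1)\<close>. If these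
  are real, then \<open>Tr([J\<^sub>1,J\<^sub>2]\<rho>) = 0\<close>, and \<open>[J\<^sub>1,J\<^sub>2] = iJ\<^sub>3\<close>.\<close>

lemma dim_row_mat_adjoint [simp]: "dim_row (mat_adjoint A) = dim_col A"
  and dim_col_mat_adjoint [simp]: "dim_col (mat_adjoint A) = dim_row A"
  unfolding mat_adjoint_def by simp_all

lemma index_mat_adjoint [simp]:
  fixes A :: "complex mat"
  shows "i < dim_col A \<Longrightarrow> j < dim_row A \<Longrightarrow> mat_adjoint A $$ (i, j) = cnj (A $$ (j, i))"
  unfolding mat_adjoint_def by (simp add: mat_of_rows_index)

lemma mat_adjoint_add:
  fixes A B :: "complex mat"
  shows "A \<in> carrier_mat m n \<Longrightarrow> B \<in> carrier_mat m n \<Longrightarrow>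
    mat_adjoint (A + B) = mat_adjoint A + mat_adjoint B"
  by (rule eq_matI) auto

lemma mat_adjoint_smult:
  fixes A :: "complex mat"
  shows "mat_adjoint (c \<cdot>\<^sub>m A) = cnj c \<cdot>\<^sub>m mat_adjoint A"
  by (rule eq_matI) auto

lemma mat_adjoint_mult:
  fixes A B :: "complex mat"
  assumes "A \<in> carrier_mat m k" "B \<in> carrier_mat k n"
  shows "mat_adjoint (A * B) = mat_adjoint B * mat_adjoint A"
proof -
  have dims: "dim_row A = m" "dim_col A = k" "dim_row B = k" "dim_col B = n"
    using assms by auto
  show ?thesis
  proof (rule eq_matI)
    fix i j
    assume "i < dim_row (mat_adjoint B * mat_adjoint A)" "j < dim_col (mat_adjoint B * mat_adjoint A)"
    then have i: "i < n" and j: "j < m" by (simp_all add: dims)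
    have "mat_adjoint (A * B) $$ (i, j) = (\<Sum>l\<in>{0..<k}. cnj (A $$ (j, l)) * cnj (B $$ (l, i)))"
      using i j by (simp add: dims scalar_prod_def cnj_sum)
    also have "\<dots> = (mat_adjoint B * mat_adjoint A) $$ (i, j)"
      using i j by (auto simp: dims scalar_prod_def intro: sum.cong)
    finally show "mat_adjoint (A * B) $$ (i, j) = (mat_adjoint B * mat_adjoint A) $$ (i, j)" .
  qed (simp_all add: dims)
qed

lemma smult_smult_mat: "a \<cdot>\<^sub>m (b \<cdot>\<^sub>m A) = (a * b) \<cdot>\<^sub>m (A :: 'a :: semigroup_mult mat)"
  by (rule eq_matI) (auto simp: mult.assoc)

lemma smult_mat_mult_vec:
  "dim_vec v = dim_col A \<Longrightarrow> (k \<cdot>\<^sub>m A) *\<^sub>v v = k \<cdot>\<^sub>v (A *\<^sub>v (v :: 'a :: comm_ring vec))"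
  by (rule eq_vecI) (auto simp: scalar_prod_def sum_distrib_left ac_simps)

lemma mtrace_mult_commute:
  assumes "A \<in> carrier_mat m n" "B \<in> carrier_mat n m"
  shows "mtrace (A * B) = mtrace (B * A)"
proof -
  have "mtrace (A * B) = (\<Sum>i<m. \<Sum>j<n. A $$ (i, j) * B $$ (j, i))"
    using assms by (simp add: mtrace_def scalar_prod_def atLeast0LessThan)
  also have "\<dots> = (\<Sum>j<n. \<Sum>i<m. B $$ (j, i) * A $$ (i, j))"
    by (subst sum.swap) (simp add: mult.commute)
  also have "\<dots> = mtrace (B * A)"
    using assms by (simp add: mtrace_def scalar_prod_def atLeast0LessThan)
  finally show ?thesis .
qed

lemma cnj_mtrace: "A \<in> carrier_mat n n \<Longrightarrow> cnj (mtrace A) = mtrace (mat_adjoint A)"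
  by (simp add: mtrace_def cnj_sum)

lemma mtrace_minus:
  "A \<in> carrier_mat n n \<Longrightarrow> B \<in> carrier_mat n n \<Longrightarrow> mtrace (A - B) = mtrace A - mtrace B"
  by (simp add: mtrace_def sum_subtractf)

lemma mtrace_smult: "A \<in> carrier_mat n n \<Longrightarrow> mtrace (c \<cdot>\<^sub>m A) = c * mtrace A"
  by (simp add: mtrace_def sum_distrib_left)

lemma cnj_mtrace_hermitian_mult:
  fixes P Q R :: "complex mat"
  assumes "P \<in> carrier_mat n n" "Q \<in> carrier_mat n n" "R \<in> carrier_mat n n"
    and "mat_adjoint P = P" "mat_adjoint Q = Q" "mat_adjoint R = R"
  shows "cnj (mtrace (P * Q * R)) = mtrace (Q * P * R)"
proof -
  have "cnj (mtrace (P * Q * R)) = mtrace (mat_adjoint (P * Q * R))"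
    using assms by (intro cnj_mtrace mult_carrier_mat)
  also have "\<dots> = mtrace (R * (Q * P))"
    using assms by (simp add: mat_adjoint_mult[of "P * Q" n n R n] mat_adjoint_mult[of P n n Q n]
        del: assoc_mult_mat)
  also have "\<dots> = mtrace (Q * P * R)"
    using assms by (simp add: mtrace_mult_commute[of R n n])
  finally show ?thesis .
qed

lemma mtrace_minus_mult_minus:
  fixes P\<^sub>1 P\<^sub>2 Q\<^sub>1 Q\<^sub>2 R :: "complex mat"
  assumes "P\<^sub>1 \<in> carrier_mat n n" "P\<^sub>2 \<in> carrier_mat n n" "Q\<^sub>1 \<in> carrier_mat n n" "Q\<^sub>2 \<in> carrier_mat n n"
    and "R \<in> carrier_mat n n"
  shows "mtrace ((P\<^sub>1 - P\<^sub>2) * (Q\<^sub>1 - Q\<^sub>2) * R) =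
    mtrace (P\<^sub>1 * Q\<^sub>1 * R) - mtrace (P\<^sub>1 * Q\<^sub>2 * R) - mtrace (P\<^sub>2 * Q\<^sub>1 * R) + mtrace (P\<^sub>2 * Q\<^sub>2 * R)"
  using assms
  by (simp add: minus_carrier_mat minus_mult_distrib_mat[where nr=n and n=n and nc=n]
      mult_minus_distrib_mat[where nr=n and n=n and nc=n] mtrace_minus[where n=n])

lemma idempotent_mult_absorb:
  fixes P Q :: "complex mat"
  assumes P: "P \<in> carrier_mat n n" and Q: "Q \<in> carrier_mat n n" and idem: "Q * Q = Q"
    and range: "\<And>w. w \<in> carrier_vec n \<Longrightarrow> \<exists>u \<in> carrier_vec n. P *\<^sub>v w = Q *\<^sub>v u"
  shows "Q * P = P"
proof (rule mat_col_eqI)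
  fix j assume "j < dim_col P"
  then have j: "j < n" using P by simp
  have "col P j = P *\<^sub>v unit_vec n j"
    using P j by (intro eq_vecI) auto
  then obtain u where u: "u \<in> carrier_vec n" "col P j = Q *\<^sub>v u"
    using range[of "unit_vec n j"] by auto
  have "col (Q * P) j = Q *\<^sub>v col P j"
    using Q P j by (rule col_mult2)
  also have "\<dots> = Q *\<^sub>v (Q *\<^sub>v u)"
    using u(2) by simp
  also have "\<dots> = col P j"
    using Q u idem by (simp flip: assoc_mult_mat_vec)
  finally show "col (Q * P) j = col P j" .
qed (use P Q in auto)

lemma hermitian_eq_if_mult_absorb:
  fixes P Q :: "complex mat"
  assumes "P \<in> carrier_mat n n" "Q \<in> carrier_mat n n" "mat_adjoint P = P" "mat_adjoint Q = Q"
    and "Q * P = P" "P * Q = Q"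
  shows "P = Q"
proof -
  have "P = mat_adjoint (Q * P)" using assms(3,5) by simp
  also have "\<dots> = mat_adjoint P * mat_adjoint Q" by (rule mat_adjoint_mult[OF assms(2,1)])
  also have "\<dots> = Q" using assms(3,4,6) by simp
  finally show ?thesis .
qed

lemma eig_proj_eqI:
  fixes A P :: "complex mat"
  assumes P: "P \<in> carrier_mat n n" and herm: "mat_adjoint P = P" and idem: "P * P = P"
    and eigenspace: "\<forall>v \<in> carrier_vec n. (\<exists>w \<in> carrier_vec n. v = P *\<^sub>v w) \<longleftrightarrow> A *\<^sub>v v = a \<cdot>\<^sub>v v"
  shows "eig_proj n A a = P"
  unfolding eig_proj_def
proof (rule the_equality)
  fix Q assume "Q \<in> carrier_mat n n \<and> mat_adjoint Q = Q \<and> Q * Q = Q \<and>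
     (\<forall>v \<in> carrier_vec n. (\<exists>w \<in> carrier_vec n. v = Q *\<^sub>v w) \<longleftrightarrow> A *\<^sub>v v = a \<cdot>\<^sub>v v)"
  then have Q: "Q \<in> carrier_mat n n" "mat_adjoint Q = Q" "Q * Q = Q"
    and same_range: "\<forall>v \<in> carrier_vec n.
      (\<exists>w \<in> carrier_vec n. v = Q *\<^sub>v w) \<longleftrightarrow> (\<exists>w \<in> carrier_vec n. v = P *\<^sub>v w)"
    using eigenspace by auto
  have "P * Q = Q"
  proof (rule idempotent_mult_absorb[OF Q(1) P idem])
    fix w :: "complex vec" assume "w \<in> carrier_vec n"
    then show "\<exists>u \<in> carrier_vec n. Q *\<^sub>v w = P *\<^sub>v u"
      using same_range Q(1) by (metis mult_mat_vec_carrier)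
  qed
  moreover have "Q * P = P"
  proof (rule idempotent_mult_absorb[OF P Q(1) Q(3)])
    fix w :: "complex vec" assume "w \<in> carrier_vec n"
    then show "\<exists>u \<in> carrier_vec n. P *\<^sub>v w = Q *\<^sub>v u"
      using same_range P by (metis mult_mat_vec_carrier)
  qed
  ultimately show "Q = P" using hermitian_eq_if_mult_absorb[OF Q(1) P Q(2) herm] by simp
qed (use assms in blast)

lemma range_eq_eigenspaceI:
  fixes A P :: "complex mat"
  assumes A: "A \<in> carrier_mat n n" and P: "P \<in> carrier_mat n n" and AP: "A * P = a \<cdot>\<^sub>m P"
    and fixes_eigenvectors: "\<And>v. v \<in> carrier_vec n \<Longrightarrow> A *\<^sub>v v = a \<cdot>\<^sub>v v \<Longrightarrow> P *\<^sub>v v = v"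
  shows "\<forall>v \<in> carrier_vec n. (\<exists>w \<in> carrier_vec n. v = P *\<^sub>v w) \<longleftrightarrow> A *\<^sub>v v = a \<cdot>\<^sub>v v"
proof (intro ballI iffI)
  fix v :: "complex vec" assume v: "v \<in> carrier_vec n"
  { assume "\<exists>w \<in> carrier_vec n. v = P *\<^sub>v w"
    then obtain w where w: "w \<in> carrier_vec n" "v = P *\<^sub>v w" by blast
    have "A *\<^sub>v v = (A * P) *\<^sub>v w" using w A P by simp
    also have "\<dots> = a \<cdot>\<^sub>v v" using w P by (simp add: AP smult_mat_mult_vec)
    finally show "A *\<^sub>v v = a \<cdot>\<^sub>v v" . }
  { assume "A *\<^sub>v v = a \<cdot>\<^sub>v v"
    then have "P *\<^sub>v v = v" using fixes_eigenvectors v by blast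
    then show "\<exists>w \<in> carrier_vec n. v = P *\<^sub>v w" using v by metis }
qed

text \<open>For \<open>A\<^sup>3 = A\<close> the spectrum lies in \<open>{-1,0,1}\<close>, and \<open>(x\<^sup>2 + s x)/2\<close> is the
  interpolation polynomial that is \<open>1\<close> at \<open>s\<close> and \<open>0\<close> at the other two points.\<close>

lemma eig_proj_tripotent:
  fixes A :: "complex mat"
  assumes A: "A \<in> carrier_mat n n" and herm: "mat_adjoint A = A" and cube: "A * A * A = A"
    and s: "s = 1 \<or> s = -1"
  shows "eig_proj n A s = (1/2) \<cdot>\<^sub>m (A * A + s \<cdot>\<^sub>m A)"
proof -
  define P where "P = (1/2) \<cdot>\<^sub>m (A * A + s \<cdot>\<^sub>m A)"
  have ss: "s * s = 1" "cnj s = s" using s by auto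
  have ss': "s * (s * x) = x" for x using ss by (simp add: mult.assoc[symmetric])
  have P: "P \<in> carrier_mat n n" using A by (simp add: P_def)
  have "mat_adjoint (A * A) = A * A" using A herm by (simp add: mat_adjoint_mult[of _ n n])
  then have herm_P: "mat_adjoint P = P"
    using A herm ss by (simp add: P_def mat_adjoint_smult mat_adjoint_add[of _ n n])
  have AP: "A * P = s \<cdot>\<^sub>m P"
  proof -
    have "A * (A * A) = A" using cube A by simp
    then show ?thesis
      using A by (simp add: P_def mult_smult_distrib[where nr=n and n=n and nc=n]
          mult_add_distrib_mat[where nr=n and n=n and nc=n] add_smult_distrib_left_mat[where nr=n and nc=n]
          mult_smult_assoc_mat[where nr=n and n=n and nc=n] smult_smult_mat ss ss'
          comm_add_mat[where nr=n and nc=n] ac_simps)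
  qed
  have "P * P = P"
  proof -
    have "P * P = ((1/2) \<cdot>\<^sub>m (A * A + s \<cdot>\<^sub>m A)) * P"
      by (simp only: P_def)
    also have "\<dots> = (1/2) \<cdot>\<^sub>m (A * (A * P) + s \<cdot>\<^sub>m (A * P))"
      using A P by (simp add: add_mult_distrib_mat[where nr=n and n=n and nc=n]
          mult_smult_assoc_mat[where nr=n and n=n and nc=n])
    also have "\<dots> = P"
      using A P by (simp add: AP mult_smult_distrib[where nr=n and n=n and nc=n] smult_smult_mat ss
          add_smult_distrib_right_mat[symmetric]) (intro eq_matI, auto)
    finally show ?thesis .
  qed
  moreover have "\<forall>v \<in> carrier_vec n. (\<exists>w \<in> carrier_vec n. v = P *\<^sub>v w) \<longleftrightarrow> A *\<^sub>v v = s \<cdot>\<^sub>v v"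
  proof (rule range_eq_eigenspaceI[OF A P AP])
    fix v :: "complex vec" assume v: "v \<in> carrier_vec n" and eig: "A *\<^sub>v v = s \<cdot>\<^sub>v v"
    show "P *\<^sub>v v = v"
      using A v by (simp add: P_def smult_mat_mult_vec add_mult_distrib_mat_vec[of _ n n] eig
          mult_mat_vec[of _ n n] smult_smult_assoc ss) (intro eq_vecI, auto)
  qed
  ultimately show ?thesis
    using P herm_P unfolding P_def by (intro eig_proj_eqI)
qed

lemma tripotent_eq_eig_proj_diff:
  fixes A :: "complex mat"
  assumes "A \<in> carrier_mat n n" "mat_adjoint A = A" "A * A * A = A"
  shows "A = eig_proj n A 1 - eig_proj n A (-1)"
  using assms by (simp add: eig_proj_tripotent) (intro eq_matI, auto simp: field_simps)

lemma kd_real_imp_mtrace_commutator_eq_0: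
  fixes A B \<rho> :: "complex mat"
  assumes A: "A \<in> carrier_mat n n" "mat_adjoint A = A" "A * A * A = A"
    and B: "B \<in> carrier_mat n n" "mat_adjoint B = B" "B * B * B = B"
    and \<rho>: "\<rho> \<in> carrier_mat n n" "mat_adjoint \<rho> = \<rho>"
    and kd_real: "\<forall>\<alpha> \<beta>. Im (kd_coeff n A B \<rho> \<alpha> \<beta>) = 0"
  shows "mtrace ((A * B - B * A) * \<rho>) = 0"
proof -
  let ?P = "eig_proj n A" and ?Q = "eig_proj n B" and ?K = "kd_coeff n A B \<rho>"
  have carrier: "?P s \<in> carrier_mat n n" "?Q s \<in> carrier_mat n n" if "s = 1 \<or> s = -1" for s
    using A B that by (simp_all add: eig_proj_tripotent)
  have "mtrace (A * B * \<rho>) = mtrace ((?P 1 - ?P (-1)) * (?Q 1 - ?Q (-1)) * \<rho>)"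
    by (simp only: tripotent_eq_eig_proj_diff[OF A, symmetric] tripotent_eq_eig_proj_diff[OF B, symmetric])
  also have "\<dots> = ?K 1 1 - ?K 1 (-1) - ?K (-1) 1 + ?K (-1) (-1)"
    using carrier \<rho>(1) by (simp add: kd_coeff_def mtrace_minus_mult_minus[where n=n])
  finally have "Im (mtrace (A * B * \<rho>)) = 0"
    using kd_real by simp
  then have "cnj (mtrace (A * B * \<rho>)) = mtrace (A * B * \<rho>)"
    by (simp add: complex_eq_iff)
  then have "mtrace (B * A * \<rho>) = mtrace (A * B * \<rho>)"
    using cnj_mtrace_hermitian_mult[OF A(1) B(1) \<rho>(1) A(2) B(2) \<rho>(2)] by simp
  then show ?thesis
    using A B \<rho> by (simp add: minus_mult_distrib_mat[where nr=n and n=n and nc=n] mtrace_minus[where n=n])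
qed

lemma less_3_cases: "(i::nat) < 3 \<longleftrightarrow> i = 0 \<or> i = 1 \<or> i = 2"
  by auto

lemma sum_atLeast0LessThan_3: "(\<Sum>k\<in>{0..<3::nat}. f k) = f 0 + f 1 + (f 2 :: 'a :: comm_monoid_add)"
  by (simp add: eval_nat_numeral add.assoc)

lemma of_real_sqrt_2_squared: "complex_of_real (sqrt 2) * complex_of_real (sqrt 2) = 2"
  by (simp flip: of_real_mult)

lemma J1_carrier: "J1 \<in> carrier_mat 3 3"
  and J2_carrier: "J2 \<in> carrier_mat 3 3"
  and J3_carrier: "J3 \<in> carrier_mat 3 3"
  by (simp_all add: J1_def J2_def J3_def)

lemma J1_hermitian: "mat_adjoint J1 = J1"
  by (rule eq_matI) (auto simp: J1_def less_3_cases)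

lemma J2_hermitian: "mat_adjoint J2 = J2"
  by (rule eq_matI) (auto simp: J2_def less_3_cases)

lemma J1_cube: "J1 * J1 * J1 = J1"
  by (rule eq_matI)
    (auto simp: J1_def less_3_cases scalar_prod_def sum_atLeast0LessThan_3 field_simps of_real_sqrt_2_squared)

lemma J2_cube: "J2 * J2 * J2 = J2"
  by (rule eq_matI)
    (auto simp: J2_def less_3_cases scalar_prod_def sum_atLeast0LessThan_3 field_simps of_real_sqrt_2_squared)

lemma J1_J2_commutator: "J1 * J2 - J2 * J1 = \<i> \<cdot>\<^sub>m J3"
  by (rule eq_matI)
    (auto simp: J1_def J2_def J3_def less_3_cases scalar_prod_def sum_atLeast0LessThan_3 field_simps
      of_real_sqrt_2_squared)

theorem proposition8:
  fixes \<rho> :: "complex mat"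
  assumes "density_operator 3 \<rho>"
    and "\<forall>\<alpha> \<beta> :: real. Im (kd_coeff 3 J1 J2 \<rho> \<alpha> \<beta>) = 0"
  shows "mtrace (J3 * \<rho>) = 0"
proof -
  have \<rho>: "\<rho> \<in> carrier_mat 3 3" "mat_adjoint \<rho> = \<rho>"
    using assms(1) unfolding density_operator_def by auto
  have "\<i> * mtrace (J3 * \<rho>) = mtrace ((J1 * J2 - J2 * J1) * \<rho>)"
    using \<rho> J3_carrier by (simp add: J1_J2_commutator mult_smult_assoc_mat mtrace_smult[where n=3])
  also have "\<dots> = 0"
    using J1_carrier J1_hermitian J1_cube J2_carrier J2_hermitian J2_cube \<rho> assms(2)
    by (rule kd_real_imp_mtrace_commutator_eq_0)
  finally show ?thesis by simp
qed

end
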